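(* Consider a tranca mínima (as defined in the context), and let $k\in\{1,2,3,4,5,6\}$. If neither of the two players of the losing team has, in their initial hand, any tile containing the number $0$ or the number $k$, then at least one of the two players of the losing team places at least one tile during the game.
   Context: Domino tiles: the set of tiles consists of the 28 unordered pairs $[a,b]=[b,a]$ with $a,b\in\{0,1,\dots,6\}$; the number of points (pips) of $[a,b]$ is $a+b$. Four players, numbered 1 to 4, play; players 1 and 3 form one team and players 2 and 4 the other. The 28 tiles are dealt, 7 to each player (the initial hands). Players take turns in cyclic order $1,2,3,4,1,\dots$. The starting player places any one of their tiles on the table, forming a line of tiles (the board) with two open ends. On each subsequent turn, the player whose turn it is must, if they hold a tile containing a number equal to the number shown at one of the two open ends, place such a tile at that end (with equal numbers adjacent), the other number of the tile becoming the new open end; if they hold no such tile, they pass. A game ends either when a player places their last tile, or in a tranca (blocked game): a position in which no player holds a tile that can be placed. In a game ending in a tranca, the team whose two players' remaining tiles have the smaller total number of pips wins, and the other team is the losing team. A tranca mínima is a game ending in a tranca in which the total number of pips on the tiles of the board at the end of the game is $42$. *)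

theory Defs
  imports Main
begin

text \<open>A tile [a,b] is represented by the normalized pair (a,b) with a \<le> b \<le> 6.\<close>
type_synonym tile = "nat \<times> nat"

definition all_tiles :: "tile set" where
  "all_tiles = {(a, b). a \<le> b \<and> b \<le> 6}"

definition pips :: "tile \<Rightarrow> nat" where
  "pips t = fst t + snd t"

definition matches :: "tile \<Rightarrow> nat \<Rightarrow> bool" where
  "matches t x \<longleftrightarrow> fst t = x \<or> snd t = x"

definition other :: "tile \<Rightarrow> nat \<Rightarrow> nat" where
  "other t x = (if fst t = x then snd t else fst t)"

definition players :: "nat set" where
  "players = {1, 2, 3, 4}"

definition deal :: "(nat \<Rightarrow> tile set) \<Rightarrow> bool" where
  "deal H \<longleftrightarrow> (\<forall>p\<in>players. H p \<subseteq> all_tiles \<and> card (H p) = 7)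
      \<and> (\<forall>p\<in>players. \<forall>q\<in>players. p \<noteq> q \<longrightarrow> H p \<inter> H q = {})
      \<and> (\<Union>p\<in>players. H p) = all_tiles"

text \<open>A move: pass, or place a tile; the boolean says at which open end
  (True = left end, False = right end); it is irrelevant for the very first tile.\<close>
datatype move = Pass | Place tile bool

text \<open>Game state: current hands, open ends of the board (None = empty board),
  list of tiles on the board.\<close>
type_synonym state = "(nat \<Rightarrow> tile set) \<times> (nat \<times> nat) option \<times> tile list"

definition can_play :: "tile set \<Rightarrow> nat \<Rightarrow> nat \<Rightarrow> bool" where
  "can_play h l r \<longleftrightarrow> (\<exists>t\<in>h. matches t l \<or> matches t r)"

definition legal :: "nat \<Rightarrow> state \<Rightarrow> move \<Rightarrow> bool" where
  "legal p s m = (case s of (H, E, B) \<Rightarrow>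
     (case E of
        None \<Rightarrow> (\<exists>t b. m = Place t b \<and> t \<in> H p)
      | Some (l, r) \<Rightarrow>
          (if can_play (H p) l r
           then (\<exists>t. (m = Place t True \<and> t \<in> H p \<and> matches t l)
                    \<or> (m = Place t False \<and> t \<in> H p \<and> matches t r))
           else m = Pass)))"

definition apply_move :: "nat \<Rightarrow> move \<Rightarrow> state \<Rightarrow> state" where
  "apply_move p m s = (case s of (H, E, B) \<Rightarrow>
     (case m of
        Pass \<Rightarrow> (H, E, B)
      | Place t left \<Rightarrow>
          (H(p := H p - {t}),
           (case E of
              None \<Rightarrow> Some (fst t, snd t)
            | Some (l, r) \<Rightarrow> (if left then Some (other t l, r) else Some (l, other t r))),
           B @ [t])))"

definition blocked :: "state \<Rightarrow> bool" where
  "blocked s = (case s of (H, E, B) \<Rightarrow>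
     (\<exists>l r. E = Some (l, r) \<and> (\<forall>p\<in>players. \<not> can_play (H p) l r)))"

definition someone_out :: "state \<Rightarrow> bool" where
  "someone_out s = (case s of (H, E, B) \<Rightarrow> (\<exists>p\<in>players. H p = {}))"

definition game_over :: "state \<Rightarrow> bool" where
  "game_over s \<longleftrightarrow> someone_out s \<or> blocked s"

definition player :: "nat \<Rightarrow> nat" where
  "player i = i mod 4 + 1"

fun run_from :: "nat \<Rightarrow> state \<Rightarrow> move list \<Rightarrow> state" where
  "run_from i s [] = s"
| "run_from i s (m # ms) = run_from (Suc i) (apply_move (player i) m s) ms"

fun valid_from :: "nat \<Rightarrow> state \<Rightarrow> move list \<Rightarrow> bool" where
  "valid_from i s [] = True"
| "valid_from i s (m # ms) \<longleftrightarrow> \<not> game_over s \<and> legal (player i) s m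
      \<and> valid_from (Suc i) (apply_move (player i) m s) ms"

definition init_state :: "(nat \<Rightarrow> tile set) \<Rightarrow> state" where
  "init_state H = (H, None, [])"

definition final_state :: "(nat \<Rightarrow> tile set) \<Rightarrow> move list \<Rightarrow> state" where
  "final_state H ms = run_from 0 (init_state H) ms"

definition complete_game :: "(nat \<Rightarrow> tile set) \<Rightarrow> move list \<Rightarrow> bool" where
  "complete_game H ms \<longleftrightarrow> deal H \<and> valid_from 0 (init_state H) ms
      \<and> game_over (final_state H ms)"

definition ends_in_tranca :: "(nat \<Rightarrow> tile set) \<Rightarrow> move list \<Rightarrow> bool" where
  "ends_in_tranca H ms \<longleftrightarrow> complete_game H ms
      \<and> blocked (final_state H ms) \<and> \<not> someone_out (final_state H ms)"

definition board_pips :: "state \<Rightarrow> nat" where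
  "board_pips s = (case s of (H, E, B) \<Rightarrow> sum_list (map pips B))"

definition tranca_minima :: "(nat \<Rightarrow> tile set) \<Rightarrow> move list \<Rightarrow> bool" where
  "tranca_minima H ms \<longleftrightarrow> ends_in_tranca H ms \<and> board_pips (final_state H ms) = 42"

definition teams :: "nat set set" where
  "teams = {{1, 3}, {2, 4}}"

definition team_pips :: "state \<Rightarrow> nat set \<Rightarrow> nat" where
  "team_pips s T = (case s of (H, E, B) \<Rightarrow> (\<Sum>p\<in>T. \<Sum>t\<in>H p. pips t))"

definition losing_team :: "(nat \<Rightarrow> tile set) \<Rightarrow> move list \<Rightarrow> nat set \<Rightarrow> bool" where
  "losing_team H ms T \<longleftrightarrow> T \<in> teams
      \<and> team_pips (final_state H ms) T > team_pips (final_state H ms) (players - T)"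

end

theory Submission
  imports Defs
begin

(*
  Suppose the losing team never places a tile. Player 1 places the first tile, so the losing
  team is {2, 4}, and its 14 tiles stay in hand until the end. They are 14 of the 15 tiles
  avoiding 0 and k; a value e outside {0, k} lies on 5 of those 15 tiles, hence on a tile of
  the team, so both open ends of the blocked board lie in {0, k}. Blocking puts every tile
  carrying an end value on the board, and at most one tile avoiding 0 and k is there.

  In a line of dominoes every value occurs an even number of times once the two open ends are
  counted as well. Hence each value v in 1..6 occurs on the board at least twice, and a board
  of 42 = 2 * (1 + ... + 6) pips has each of them exactly twice. That is impossible: if k is
  an open end, the tiles (0, k) and (k, k) already give k three occurrences; if both ends are
  0, the seven 0-tiles contribute only six nonzero values, and the remaining six must come from
  at most one further k-tile and one tile avoiding 0 and k, which carry at most four.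
*)

definition tile_list :: "tile list" where
  "tile_list = [(0,0),(0,1),(0,2),(0,3),(0,4),(0,5),(0,6),(1,1),(1,2),(1,3),(1,4),(1,5),(1,6),
    (2,2),(2,3),(2,4),(2,5),(2,6),(3,3),(3,4),(3,5),(3,6),(4,4),(4,5),(4,6),(5,5),(5,6),(6,6)]"

lemma distinct_tile_list: "distinct tile_list"
  by (simp add: tile_list_def)

lemma set_tile_list: "set tile_list = all_tiles"
proof
  show "set tile_list \<subseteq> all_tiles"
    by (auto simp: tile_list_def all_tiles_def)
  show "all_tiles \<subseteq> set tile_list"
  proof
    fix t assume "t \<in> all_tiles"
    then obtain a b where t: "t = (a, b)" "a \<le> b" "b \<le> 6"
      by (auto simp: all_tiles_def)
    then have "a \<in> {0,1,2,3,4,5,6}" "b \<in> {0,1,2,3,4,5,6}"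
      by auto
    then show "t \<in> set tile_list"
      using t unfolding tile_list_def by (simp, elim disjE, simp_all)
  qed
qed

lemma finite_all_tiles: "finite all_tiles"
  by (simp flip: set_tile_list)

lemma tile_in_all_tiles: "a \<le> b \<Longrightarrow> b \<le> 6 \<Longrightarrow> (a, b) \<in> all_tiles"
  by (simp add: all_tiles_def)

lemma card_all_tiles_filter: "card {t \<in> all_tiles. P t} = length (filter P tile_list)"
  by (metis distinct_card distinct_filter distinct_tile_list set_filter set_tile_list)

lemma sum_all_tiles_filter:
  "(\<Sum>t \<in> {t \<in> all_tiles. P t}. f t) = (\<Sum>t \<leftarrow> filter P tile_list. f t)"
  by (metis distinct_filter distinct_tile_list set_filter set_tile_list
      sum_list_distinct_conv_sum_set)

definition tiles_avoiding :: "nat set \<Rightarrow> tile set" where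
  "tiles_avoiding X = {t \<in> all_tiles. \<forall>x \<in> X. \<not> matches t x}"

lemma finite_tiles_avoiding: "finite (tiles_avoiding X)"
  unfolding tiles_avoiding_def using finite_all_tiles by simp

lemma one_to_six_cases: "(k::nat) \<in> {1..6} \<Longrightarrow> k = 1 \<or> k = 2 \<or> k = 3 \<or> k = 4 \<or> k = 5 \<or> k = 6"
  by auto

lemma card_tiles_avoiding_0_k: "k \<in> {1..6} \<Longrightarrow> card (tiles_avoiding {0, k}) = 15"
  unfolding tiles_avoiding_def card_all_tiles_filter
  by (drule one_to_six_cases, elim disjE; simp add: tile_list_def matches_def)

lemma card_tiles_avoiding_0_k_l:
  "k \<in> {1..6} \<Longrightarrow> l \<in> {1..6} \<Longrightarrow> l \<noteq> k \<Longrightarrow> card (tiles_avoiding {0, k, l}) = 10"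
  unfolding tiles_avoiding_def card_all_tiles_filter
  by (drule one_to_six_cases, drule one_to_six_cases, elim disjE; simp add: tile_list_def matches_def)

lemma almost_all_avoiding_tiles_match:
  assumes k: "k \<in> {1..6}" and e: "e \<le> 6" "e \<notin> {0, k}"
    and U: "U \<subseteq> tiles_avoiding {0, k}" "card U = 14"
  shows "\<exists>t \<in> U. matches t e"
proof (rule ccontr)
  assume "\<not> ?thesis"
  then have "U \<subseteq> tiles_avoiding {0, k, e}"
    using U(1) by (auto simp: tiles_avoiding_def)
  then have "card U \<le> card (tiles_avoiding {0, k, e})"
    by (intro card_mono finite_tiles_avoiding)
  also have "\<dots> = 10"
    using k e by (intro card_tiles_avoiding_0_k_l) auto
  finally show False
    using U(2) by simp
qed

lemma card_inter_tiles_avoiding_le_1: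
  assumes "k \<in> {1..6}" and "U \<subseteq> tiles_avoiding {0, k}" "card U = 14" and "A \<inter> U = {}"
  shows "card (A \<inter> tiles_avoiding {0, k}) \<le> 1"
proof -
  have "card (A \<inter> tiles_avoiding {0, k}) \<le> card (tiles_avoiding {0, k} - U)"
    using assms(4) by (intro card_mono) (auto simp: finite_tiles_avoiding)
  also have "\<dots> = 1"
    using assms(1-3) finite_subset[OF assms(2) finite_tiles_avoiding]
    by (simp add: card_Diff_subset card_tiles_avoiding_0_k)
  finally show ?thesis .
qed

definition tile_count :: "nat \<Rightarrow> tile \<Rightarrow> nat" where
  "tile_count v t = of_bool (fst t = v) + of_bool (snd t = v)"

definition occurrences :: "nat \<Rightarrow> tile set \<Rightarrow> nat" where
  "occurrences v A = (\<Sum>t \<in> A. tile_count v t)"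

lemma weighted_of_bool_sum: "a \<le> 6 \<Longrightarrow> (\<Sum>v \<in> {1..6}. v * of_bool (a = v)) = (a::nat)"
proof -
  assume "a \<le> 6"
  have "(\<Sum>v \<in> {1..6}. v * of_bool (a = v)) = (\<Sum>v \<in> {1..6::nat}. if v = a then v else 0)"
    by (intro sum.cong) auto
  also have "\<dots> = a"
    using \<open>a \<le> 6\<close> by simp
  finally show ?thesis .
qed

lemma weighted_tile_count_eq_pips:
  assumes "t \<in> all_tiles"
  shows "(\<Sum>v \<in> {1..6}. v * tile_count v t) = pips t"
proof -
  have "fst t \<le> 6" "snd t \<le> 6"
    using assms by (auto simp: all_tiles_def)
  then show ?thesis
    by (simp only: tile_count_def pips_def distrib_left sum.distrib weighted_of_bool_sum)
qed

lemma sum_pips_eq_weighted_occurrences: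
  assumes "A \<subseteq> all_tiles"
  shows "sum pips A = (\<Sum>v \<in> {1..6}. v * occurrences v A)"
proof -
  have "sum pips A = (\<Sum>t \<in> A. \<Sum>v \<in> {1..6}. v * tile_count v t)"
    using assms by (intro sum.cong refl) (metis subsetD weighted_tile_count_eq_pips)
  also have "\<dots> = (\<Sum>v \<in> {1..6}. v * occurrences v A)"
    by (subst sum.swap) (simp add: occurrences_def sum_distrib_left)
  finally show ?thesis .
qed

lemma occurrences_mono: "finite B \<Longrightarrow> A \<subseteq> B \<Longrightarrow> occurrences v A \<le> occurrences v B"
  unfolding occurrences_def by (rule sum_mono2) auto

lemma card_matching_le_occurrences:
  assumes "finite A"
  shows "card {t \<in> A. matches t v} \<le> occurrences v A"
proof -
  have "card {t \<in> A. matches t v} = (\<Sum>t \<in> {t \<in> A. matches t v}. 1)"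
    by simp
  also have "\<dots> \<le> (\<Sum>t \<in> {t \<in> A. matches t v}. tile_count v t)"
    by (rule sum_mono) (auto simp: tile_count_def matches_def)
  also have "\<dots> \<le> occurrences v A"
    unfolding occurrences_def using assms by (intro sum_mono2) auto
  finally show ?thesis .
qed

lemma sum_tile_count_le_2: "finite V \<Longrightarrow> (\<Sum>v \<in> V. tile_count v t) \<le> 2"
proof -
  assume "finite V"
  have at_most_one: "card (V \<inter> {a}) \<le> 1" for a :: nat
    using card_mono[of "{a}" "V \<inter> {a}"] by auto
  have "card (V \<inter> {fst t}) + card (V \<inter> {snd t}) \<le> 1 + 1"
    by (rule add_mono[OF at_most_one at_most_one])
  then show ?thesis
    using \<open>finite V\<close> by (simp add: tile_count_def sum.distrib)
qed

lemma all_two_if_weighted_sum_42: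
  fixes f :: "nat \<Rightarrow> nat"
  assumes "\<forall>v \<in> {1..6}. 2 \<le> f v" and "(\<Sum>v \<in> {1..6}. v * f v) = 42" and "v \<in> {1..6}"
  shows "f v = 2"
proof (rule ccontr)
  assume "f v \<noteq> 2"
  then have "2 < f v"
    using assms(1,3) by force
  then have "v * 2 < v * f v"
    using assms(3) by simp
  then have "(\<Sum>v \<in> {1..6::nat}. v * 2) < (\<Sum>v \<in> {1..6}. v * f v)"
    using assms(1) by (intro sum_strict_mono_ex1 bexI[OF _ assms(3)]) auto
  moreover have "(\<Sum>v \<in> {1..6::nat}. v * 2) = 42"
    by (simp add: atLeastAtMostSuc_conv numeral_eq_Suc)
  ultimately show False
    using assms(2) by simp
qed

lemma nonzero_count_of_zero_tiles:
  "(\<Sum>t \<in> {t \<in> all_tiles. matches t 0}. \<Sum>v \<in> {1..6}. tile_count v t) = 6"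
proof -
  have "{1..6::nat} = {1, 2, 3, 4, 5, 6}"
    by auto
  then show ?thesis
    unfolding sum_all_tiles_filter by (simp add: tile_list_def matches_def tile_count_def)
qed

locale blocked_board =
  fixes k l r :: nat and board :: "tile set"
  assumes k_range: "k \<in> {1..6}"
    and board_tiles: "board \<subseteq> all_tiles"
    and ends: "l \<in> {0, k}" "r \<in> {0, k}"
    and end_tiles_on_board: "\<And>t. t \<in> all_tiles \<Longrightarrow> matches t l \<or> matches t r \<Longrightarrow> t \<in> board"
    and parity: "\<And>v. even (occurrences v board + of_bool (l = v) + of_bool (r = v))"
    and few_avoiding: "card (board \<inter> tiles_avoiding {0, k}) \<le> 1"
begin

lemma finite_board: "finite board"
  using board_tiles finite_all_tiles by (rule finite_subset)

lemma occurrences_ge_2: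
  assumes v: "v \<in> {1..6}"
  shows "2 \<le> occurrences v board"
proof (cases "v = k \<and> k \<in> {l, r}")
  case True
  then have "(k, k) \<in> board"
    using k_range by (intro end_tiles_on_board tile_in_all_tiles) (auto simp: matches_def)
  then have "occurrences k {(k, k)} \<le> occurrences k board"
    by (intro occurrences_mono finite_board) auto
  then show ?thesis
    using True by (simp add: occurrences_def tile_count_def)
next
  case False
  then have "v \<notin> {l, r}"
    using ends v by auto
  then have "even (occurrences v board)"
    using parity[of v] by auto
  moreover have "(min l v, max l v) \<in> board"
    using ends k_range v by (intro end_tiles_on_board tile_in_all_tiles) (auto simp: matches_def)
  then have "occurrences v {(min l v, max l v)} \<le> occurrences v board"
    by (intro occurrences_mono finite_board) auto
  then have "1 \<le> occurrences v board"
    by (simp add: occurrences_def tile_count_def min_def max_def split: if_splits)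
  ultimately show ?thesis
    by presburger
qed

lemma occurrences_k_ge_3_if_k_end:
  assumes "k \<in> {l, r}"
  shows "3 \<le> occurrences k board"
proof -
  have "(0, k) \<in> board" "(k, k) \<in> board"
    using assms k_range by (auto intro!: end_tiles_on_board tile_in_all_tiles simp: matches_def)
  then have "occurrences k {(0, k), (k, k)} \<le> occurrences k board"
    by (intro occurrences_mono finite_board) auto
  then show ?thesis
    using k_range by (simp add: occurrences_def tile_count_def)
qed

lemma occurrences_bound_if_zero_ends:
  assumes "l = 0" "r = 0"
  shows "(\<Sum>v \<in> {1..6}. occurrences v board) \<le> 2 * occurrences k board + 6"
proof -
  define zero_tiles where "zero_tiles = {t \<in> all_tiles. matches t 0}"
  define k_tiles where "k_tiles = {t \<in> board. matches t k \<and> \<not> matches t 0}"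
  have zero_tiles_on_board: "zero_tiles \<subseteq> board"
    using assms end_tiles_on_board unfolding zero_tiles_def by blast
  have "(0, k) \<in> zero_tiles"
    using k_range by (auto simp: zero_tiles_def matches_def intro: tile_in_all_tiles)
  then have "insert (0, k) k_tiles \<subseteq> {t \<in> board. matches t k}" "(0, k) \<notin> k_tiles"
    using zero_tiles_on_board by (auto simp: k_tiles_def matches_def)
  moreover have "finite k_tiles"
    using finite_board by (simp add: k_tiles_def)
  ultimately have "card k_tiles + 1 \<le> card {t \<in> board. matches t k}"
    using card_mono[of "{t \<in> board. matches t k}" "insert (0, k) k_tiles"] finite_board by simp
  then have k_tiles_bound: "card k_tiles + 1 \<le> occurrences k board"
    using card_matching_le_occurrences[OF finite_board] le_trans by blast
  have "board - zero_tiles \<subseteq> (board \<inter> tiles_avoiding {0, k}) \<union> k_tiles"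
    using board_tiles by (auto simp: zero_tiles_def k_tiles_def tiles_avoiding_def)
  then have "card (board - zero_tiles) \<le> card ((board \<inter> tiles_avoiding {0, k}) \<union> k_tiles)"
    using finite_board by (intro card_mono) (auto simp: k_tiles_def)
  also have "\<dots> \<le> card (board \<inter> tiles_avoiding {0, k}) + card k_tiles"
    by (rule card_Un_le)
  finally have card_rest: "card (board - zero_tiles) \<le> occurrences k board"
    using few_avoiding k_tiles_bound by linarith
  have "(\<Sum>v \<in> {1..6}. occurrences v board) = (\<Sum>t \<in> board. \<Sum>v \<in> {1..6}. tile_count v t)"
    unfolding occurrences_def by (rule sum.swap)
  also have "\<dots> = (\<Sum>t \<in> zero_tiles. \<Sum>v \<in> {1..6}. tile_count v t)
      + (\<Sum>t \<in> board - zero_tiles. \<Sum>v \<in> {1..6}. tile_count v t)"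
    using sum.subset_diff[OF zero_tiles_on_board finite_board] by (metis add.commute)
  also have "(\<Sum>t \<in> zero_tiles. \<Sum>v \<in> {1..6}. tile_count v t) = 6"
    unfolding zero_tiles_def by (rule nonzero_count_of_zero_tiles)
  also have "(\<Sum>t \<in> board - zero_tiles. \<Sum>v \<in> {1..6}. tile_count v t) \<le> (\<Sum>t \<in> board - zero_tiles. 2)"
    by (intro sum_mono sum_tile_count_le_2) simp
  finally show ?thesis
    using card_rest by simp
qed

lemma sum_pips_ne_42: "sum pips board \<noteq> 42"
proof
  assume "sum pips board = 42"
  then have weighted: "(\<Sum>v \<in> {1..6}. v * occurrences v board) = 42"
    using sum_pips_eq_weighted_occurrences[OF board_tiles] by simp
  have two: "occurrences v board = 2" if "v \<in> {1..6}" for v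
    using all_two_if_weighted_sum_42[OF _ weighted that] occurrences_ge_2 by blast
  show False
  proof (cases "k \<in> {l, r}")
    case True
    then show False
      using occurrences_k_ge_3_if_k_end two[OF k_range] by simp
  next
    case False
    then have "(\<Sum>v \<in> {1..6}. occurrences v board) \<le> 10"
      using ends occurrences_bound_if_zero_ends two[OF k_range] by simp
    moreover have "(\<Sum>v \<in> {1..6}. occurrences v board) = (\<Sum>v \<in> {1..6::nat}. 2)"
      using two by (rule sum.cong[OF refl])
    ultimately show False
      by simp
  qed
qed

end

fun tiles_partitioned :: "state \<Rightarrow> bool" where
  "tiles_partitioned (H, E, B) \<longleftrightarrow>
     (\<forall>p \<in> players. \<forall>q \<in> players. p \<noteq> q \<longrightarrow> H p \<inter> H q = {})
     \<and> (\<forall>p \<in> players. H p \<inter> set B = {}) \<and> distinct B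
     \<and> (\<Union>p \<in> players. H p) \<union> set B = all_tiles"

fun open_ends_consistent :: "state \<Rightarrow> bool" where
  "open_ends_consistent (H, None, B) \<longleftrightarrow> B = []"
| "open_ends_consistent (H, Some (l, r), B) \<longleftrightarrow> l \<le> 6 \<and> r \<le> 6
     \<and> (\<forall>v. even ((\<Sum>t \<leftarrow> B. tile_count v t) + of_bool (l = v) + of_bool (r = v)))"

lemma legal_Place_in_hand: "legal p (H, E, B) (Place t b) \<Longrightarrow> t \<in> H p"
  by (auto simp: legal_def split: option.splits if_splits)

lemma legal_Place_matches: "legal p (H, Some (l, r), B) (Place t b) \<Longrightarrow> matches t (if b then l else r)"
  by (auto simp: legal_def split: if_splits)

lemma tile_count_other:
  "matches t x \<Longrightarrow> tile_count v t + of_bool (other t x = v) = of_bool (x = v) + 2 * of_bool (other t x = v)"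
  by (auto simp: tile_count_def other_def matches_def)

lemma tiles_partitioned_apply_move:
  assumes "p \<in> players" and "legal p s m" and "tiles_partitioned s"
  shows "tiles_partitioned (apply_move p m s)"
proof -
  obtain H E B where s: "s = (H, E, B)"
    by (cases s)
  show ?thesis
  proof (cases m)
    case Pass
    then show ?thesis
      using assms(3) by (simp add: s apply_move_def)
  next
    case (Place t b)
    have "t \<in> H p"
      using assms(2) legal_Place_in_hand by (simp add: s Place)
    moreover have "(\<Union>q \<in> players. (H(p := H p - {t})) q) \<union> set (B @ [t]) = (\<Union>q \<in> players. H q) \<union> set B"
      using \<open>t \<in> H p\<close> assms(1) by auto
    ultimately show ?thesis
      using assms by (auto simp: s Place apply_move_def)
  qed
qed

lemma open_ends_consistent_place:
  assumes consistent: "open_ends_consistent (H, Some (l, r), B)"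
    and "t \<in> all_tiles" and matching: "matches t (if b then l else r)"
  shows "open_ends_consistent (H', if b then Some (other t l, r) else Some (l, other t r), B @ [t])"
proof -
  have small: "l \<le> 6" "r \<le> 6" "other t x \<le> 6" for x
    using consistent \<open>t \<in> all_tiles\<close> by (auto simp: all_tiles_def other_def)
  have parity: "even ((\<Sum>s \<leftarrow> B. tile_count v s) + of_bool (l = v) + of_bool (r = v))" for v
    using consistent unfolding open_ends_consistent.simps by blast
  have board: "(\<Sum>s \<leftarrow> B @ [t]. tile_count v s) = (\<Sum>s \<leftarrow> B. tile_count v s) + tile_count v t" for v
    by simp
  show ?thesis
  proof (cases b)
    case True
    then have "matches t l"
      using matching by simp
    then have "even ((\<Sum>s \<leftarrow> B @ [t]. tile_count v s) + of_bool (other t l = v) + of_bool (r = v))" for v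
      using parity[of v] board[of v] tile_count_other[of t l v] by presburger
    then show ?thesis
      unfolding if_P[OF True] open_ends_consistent.simps using small by blast
  next
    case False
    then have "matches t r"
      using matching by simp
    then have "even ((\<Sum>s \<leftarrow> B @ [t]. tile_count v s) + of_bool (l = v) + of_bool (other t r = v))" for v
      using parity[of v] board[of v] tile_count_other[of t r v] by presburger
    then show ?thesis
      unfolding if_not_P[OF False] open_ends_consistent.simps using small by blast
  qed
qed

lemma open_ends_consistent_apply_move:
  assumes "p \<in> players" and "legal p s m" and "tiles_partitioned s" and "open_ends_consistent s"
  shows "open_ends_consistent (apply_move p m s)"
proof (cases m)
  case Pass
  then show ?thesis
    using assms(4) by (cases s) (simp add: apply_move_def)
next
  case (Place t b)
  obtain H E B where s: "s = (H, E, B)"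
    by (cases s)
  have "t \<in> H p"
    using assms(2) legal_Place_in_hand by (simp add: s Place)
  then have "t \<in> all_tiles"
    using assms(1,3) by (auto simp: s)
  show ?thesis
  proof (cases E)
    case None
    then show ?thesis
      using assms(4) \<open>t \<in> all_tiles\<close>
      by (cases t) (simp add: s Place apply_move_def tile_count_def all_tiles_def)
  next
    case (Some ends)
    then obtain l r where E: "E = Some (l, r)"
      by (cases ends) auto
    have "matches t (if b then l else r)"
      using assms(2) legal_Place_matches by (simp add: s Place E)
    then have "open_ends_consistent
        (H(p := H p - {t}), if b then Some (other t l, r) else Some (l, other t r), B @ [t])"
      using open_ends_consistent_place assms(4) \<open>t \<in> all_tiles\<close> by (simp only: s E)
    then show ?thesis
      by (simp only: s Place E apply_move_def prod.case move.case option.case)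
  qed
qed

lemma player_in_players: "player i \<in> players"
  unfolding player_def players_def by simp presburger

lemma run_from_invariant:
  assumes step: "\<And>p s m. p \<in> players \<Longrightarrow> legal p s m \<Longrightarrow> P s \<Longrightarrow> P (apply_move p m s)"
  shows "P s \<Longrightarrow> valid_from i s ms \<Longrightarrow> P (run_from i s ms)"
proof (induction ms arbitrary: i s)
  case Nil
  then show ?case
    by simp
next
  case (Cons m ms)
  then have "P (apply_move (player i) m s)"
    using step player_in_players by simp
  then show ?case
    using Cons by simp
qed

lemma final_state_invariants:
  assumes "deal H" and "valid_from 0 (init_state H) ms"
  shows "tiles_partitioned (final_state H ms)" and "open_ends_consistent (final_state H ms)"
proof -
  have "tiles_partitioned (init_state H) \<and> open_ends_consistent (init_state H)"
    using assms(1) by (simp add: init_state_def deal_def)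
  then have "tiles_partitioned (final_state H ms) \<and> open_ends_consistent (final_state H ms)"
    unfolding final_state_def using assms(2)
    by (rule run_from_invariant[rotated])
      (auto intro: tiles_partitioned_apply_move open_ends_consistent_apply_move)
  then show "tiles_partitioned (final_state H ms)" "open_ends_consistent (final_state H ms)"
    by simp_all
qed

lemma run_from_hand_unchanged:
  assumes "\<forall>j < length ms. player (i + j) = p \<longrightarrow> ms ! j = Pass"
  shows "fst (run_from i s ms) p = fst s p"
  using assms
proof (induction ms arbitrary: i s)
  case Nil
  then show ?case
    by simp
next
  case (Cons m ms)
  have "player i = p \<longrightarrow> m = Pass"
    using Cons.prems[rule_format, of 0] by simp
  then have "fst (apply_move (player i) m s) p = fst s p"
    by (cases m) (auto simp: apply_move_def split: prod.splits)
  moreover have "\<forall>j < length ms. player (Suc i + j) = p \<longrightarrow> ms ! j = Pass"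
    using Cons.prems[rule_format, of "Suc _"] by simp
  ultimately show ?case
    using Cons.IH by simp
qed

lemma first_move_is_Place: "valid_from 0 (init_state H) (m # ms) \<Longrightarrow> \<exists>t b. m = Place t b"
  by (auto simp: init_state_def legal_def)

lemma blocked_state_board_pips_ne_42:
  assumes k: "k \<in> {1..6}"
    and partitioned: "tiles_partitioned (Hs, Some (l, r), B)"
    and consistent: "open_ends_consistent (Hs, Some (l, r), B)"
    and stuck: "\<forall>p \<in> players. \<not> can_play (Hs p) l r"
    and held: "U \<subseteq> (\<Union>p \<in> players. Hs p)"
    and U: "U \<subseteq> tiles_avoiding {0, k}" "card U = 14"
  shows "(\<Sum>t \<leftarrow> B. pips t) \<noteq> 42"
proof -
  have board_tiles: "set B \<subseteq> all_tiles" and "distinct B" and "set B \<inter> U = {}"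
    using partitioned held by (simp_all only: tiles_partitioned.simps) blast+
  have end_tiles_on_board: "t \<in> set B" if "t \<in> all_tiles" "matches t l \<or> matches t r" for t
    using partitioned stuck that unfolding can_play_def tiles_partitioned.simps by blast
  have unmatched: "\<not> (\<exists>t \<in> U. matches t e)" if "e \<in> {l, r}" for e
    using stuck held that by (fastforce simp: can_play_def)
  have "e \<in> {0, k}" if "e \<in> {l, r}" for e
  proof (rule ccontr)
    assume "e \<notin> {0, k}"
    moreover have "e \<le> 6"
      using that consistent by auto
    ultimately show False
      using almost_all_avoiding_tiles_match[OF k _ _ U] unmatched[OF that] by blast
  qed
  then have "l \<in> {0, k}" "r \<in> {0, k}"
    by simp_all
  moreover have "even (occurrences v (set B) + of_bool (l = v) + of_bool (r = v))" for v
    using consistent \<open>distinct B\<close> by (simp add: occurrences_def sum_list_distinct_conv_sum_set)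
  moreover have "card (set B \<inter> tiles_avoiding {0, k}) \<le> 1"
    using k U \<open>set B \<inter> U = {}\<close> by (rule card_inter_tiles_avoiding_le_1)
  ultimately interpret blocked_board k l r "set B"
    using k board_tiles end_tiles_on_board by unfold_locales auto
  show ?thesis
    using sum_pips_ne_42 \<open>distinct B\<close> by (simp add: sum_list_distinct_conv_sum_set)
qed

lemma card_union_of_two_hands:
  assumes "deal H" and "p \<in> players" "q \<in> players" "p \<noteq> q"
  shows "card (H p \<union> H q) = 14"
proof -
  have "finite (H p)" "finite (H q)"
    using assms finite_all_tiles by (auto simp: deal_def intro: finite_subset)
  then show ?thesis
    using assms by (simp add: deal_def card_Un_disjoint)
qed

lemma tranca_minima_final_state:
  assumes "tranca_minima H ms"
  obtains Hs l r B where "final_state H ms = (Hs, Some (l, r), B)"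
    and "\<forall>p \<in> players. \<not> can_play (Hs p) l r"
    and "tiles_partitioned (Hs, Some (l, r), B)" "open_ends_consistent (Hs, Some (l, r), B)"
    and "(\<Sum>t \<leftarrow> B. pips t) = 42"
proof -
  have deal: "deal H" and valid: "valid_from 0 (init_state H) ms"
    and "blocked (final_state H ms)" and pips: "board_pips (final_state H ms) = 42"
    using assms by (auto simp: tranca_minima_def ends_in_tranca_def complete_game_def)
  then obtain Hs l r B where final: "final_state H ms = (Hs, Some (l, r), B)"
    and "\<forall>p \<in> players. \<not> can_play (Hs p) l r"
    by (auto simp: blocked_def split: prod.splits)
  moreover have "tiles_partitioned (Hs, Some (l, r), B)" "open_ends_consistent (Hs, Some (l, r), B)"
    using final_state_invariants[OF deal valid] unfolding final .
  moreover have "(\<Sum>t \<leftarrow> B. pips t) = 42"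
    using pips final by (simp add: board_pips_def)
  ultimately show ?thesis
    by (rule that)
qed

theorem mainTheorem4:
  fixes H :: "nat \<Rightarrow> tile set" and ms :: "move list" and T :: "nat set" and k :: nat
  assumes "tranca_minima H ms"
    and "losing_team H ms T"
    and "k \<in> {1..6}"
    and "\<forall>p\<in>T. \<forall>t\<in>H p. \<not> matches t 0 \<and> \<not> matches t k"
  shows "\<exists>i < length ms. player i \<in> T \<and> (\<exists>t b. ms ! i = Place t b)"
proof (rule ccontr)
  assume "\<not> ?thesis"
  then have silent: "\<forall>i < length ms. player i \<in> T \<longrightarrow> ms ! i = Pass"
    by (metis move.exhaust)
  obtain Hs l r B where final: "final_state H ms = (Hs, Some (l, r), B)"
    and stuck: "\<forall>p \<in> players. \<not> can_play (Hs p) l r"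
    and invariants: "tiles_partitioned (Hs, Some (l, r), B)" "open_ends_consistent (Hs, Some (l, r), B)"
    and pips: "(\<Sum>t \<leftarrow> B. pips t) = 42"
    using tranca_minima_final_state[OF assms(1)] .
  have deal: "deal H" and valid: "valid_from 0 (init_state H) ms"
    using assms(1) by (simp_all add: tranca_minima_def ends_in_tranca_def complete_game_def)
  obtain m ms' where "ms = m # ms'"
    using final by (cases ms) (auto simp: final_state_def init_state_def)
  then have "T = {2, 4}"
    using silent first_move_is_Place[of H m ms'] valid assms(2)
    by (auto simp: losing_team_def teams_def player_def)
  then have "H 2 \<union> H 4 \<subseteq> (\<Union>p \<in> players. Hs p)"
    using run_from_hand_unchanged[of ms 0 _ "init_state H"] silent final
    by (auto simp: final_state_def init_state_def players_def)
  moreover have "H 2 \<union> H 4 \<subseteq> tiles_avoiding {0, k}"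
    using assms(4) deal \<open>T = {2, 4}\<close> by (auto simp: deal_def players_def tiles_avoiding_def)
  moreover have "card (H 2 \<union> H 4) = 14"
    using deal by (rule card_union_of_two_hands) (simp_all add: players_def)
  ultimately show False
    using blocked_state_board_pips_ne_42[OF assms(3) invariants stuck] pips by blast
qed

end
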